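(* Let $r<0$ and $0<y_1\le y_2$, and let $$p(z)=(z-r)\prod_{j=1}^2(z-(r+iy_j))(z-(r-iy_j)).$$ Then $(1/p(n))_{n\in\mathbb Z_+}$ is a Hausdorff moment sequence if and only if $y_2/y_1$ is a positive integer greater than $1$.
   Context: A sequence $(x_n)_{n\in\mathbb Z_+}$ of positive numbers is a Hausdorff moment sequence if there is a positive Radon measure $\mu$ on $[0,1]$ with $x_n=\int_0^1 t^n\,d\mu(t)$ for all $n\in\mathbb Z_+$. *)

theory Defs
  imports "HOL-Analysis.Analysis"
begin

definition hausdorff_moment_seq :: "(nat \<Rightarrow> real) \<Rightarrow> bool" where
  "hausdorff_moment_seq x \<longleftrightarrow>
     (\<forall>n. x n > 0) \<and>
     (\<exists>\<mu> :: real measure.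
        space \<mu> = {0..1} \<and>
        sets \<mu> = sets (restrict_space borel {0..1}) \<and>
        finite_measure \<mu> \<and>
        (\<forall>n. x n = (\<integral>t. t ^ n \<partial>\<mu>)))"

end

theory Submission
  imports Defs "HOL-Real_Asymp.Real_Asymp"
begin

text \<open>Put \<open>s = - r\<close> and \<open>P c = c (c\<^sup>2 + y\<^sub>1\<^sup>2) (c\<^sup>2 + y\<^sub>2\<^sup>2)\<close> (\<open>quintic\<close>), so
  that \<open>x\<^sub>n = 1 / P (s + n)\<close>. By partial fractions \<open>1 / P\<close> is the Laplace transform of an
  explicit trigonometric kernel \<open>K\<close> (\<open>quintic_kernel\<close>), hence \<open>x\<^sub>n = \<integral>\<^sub>0\<^sup>\<infinity> e\<^sup>-\<^sup>n\<^sup>u e\<^sup>-\<^sup>s\<^sup>u K u du\<close>: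
  \<open>x\<close> is the moment sequence of the image of the signed measure \<open>e\<^sup>-\<^sup>s\<^sup>u K u du\<close> under
  \<open>u \<mapsto> e\<^sup>-\<^sup>u\<close>. Since a finite measure on \<open>[0, 1]\<close> is determined by its moments
  (Weierstrass approximation), \<open>x\<close> is a Hausdorff moment sequence iff \<open>K \<ge> 0\<close> on
  \<open>(0, \<infinity>)\<close>. Finally \<open>K \<ge> 0\<close> iff \<open>y\<^sub>2 = k y\<^sub>1\<close> for an integer \<open>k \<ge> 2\<close>:
  then \<open>\<bar>sin (k v)\<bar> \<le> k \<bar>sin v\<bar>\<close> gives nonnegativity, while otherwise \<open>K\<close> is
  negative at \<open>2 \<pi> / y\<^sub>1\<close>, or at \<open>5 \<pi> / (2 y\<^sub>1)\<close> when \<open>y\<^sub>1 = y\<^sub>2\<close>.\<close>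

section \<open>Laplace transforms\<close>

definition has_laplace_transform :: "(real \<Rightarrow> real) \<Rightarrow> real \<Rightarrow> real \<Rightarrow> bool" where
  "has_laplace_transform f c L \<longleftrightarrow>
     has_bochner_integral lborel (\<lambda>u. indicator {0<..} u *\<^sub>R (exp (- (c * u)) * f u)) L"

lemma has_laplace_transform_iff:
  "has_laplace_transform f c L \<longleftrightarrow>
     set_integrable lborel {0<..} (\<lambda>u. exp (- (c * u)) * f u) \<and>
     (LBINT u:{0<..}. exp (- (c * u)) * f u) = L"
  unfolding has_laplace_transform_def set_integrable_def set_lebesgue_integral_def
  by (auto simp: has_bochner_integral_iff)

lemma has_laplace_transform_add:
  assumes "has_laplace_transform f c L" "has_laplace_transform g c M"
  shows "has_laplace_transform (\<lambda>u. f u + g u) c (L + M)"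
  using has_bochner_integral_add[OF assms[unfolded has_laplace_transform_def]]
  unfolding has_laplace_transform_def by (simp add: distrib_left)

lemma has_laplace_transform_diff:
  assumes "has_laplace_transform f c L" "has_laplace_transform g c M"
  shows "has_laplace_transform (\<lambda>u. f u - g u) c (L - M)"
  using has_bochner_integral_diff[OF assms[unfolded has_laplace_transform_def]]
  unfolding has_laplace_transform_def by (simp add: right_diff_distrib)

lemma has_laplace_transform_cmult:
  assumes "has_laplace_transform f c L"
  shows "has_laplace_transform (\<lambda>u. k * f u) c (k * L)"
  using has_bochner_integral_mult_right[OF assms[unfolded has_laplace_transform_def], of k]
  unfolding has_laplace_transform_def by (simp add: mult.left_commute)

lemma set_integrable_exp_mult_linear_growth:
  fixes f :: "real \<Rightarrow> real"
  assumes c: "c > 0" and f: "f \<in> borel_measurable borel"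
    and bound: "\<And>u. u > 0 \<Longrightarrow> \<bar>f u\<bar> \<le> K * (1 + u)"
  shows "set_integrable lborel {0<..} (\<lambda>u. exp (- (c * u)) * f u)"
proof (rule set_integrable_bound)
  let ?F = "\<lambda>u::real. - ((1 + u) / c + 1 / c^2) * exp (- (c * u))"
  have "set_integrable lborel (einterval 0 \<infinity>) (\<lambda>u. (1 + u) * exp (- (c * u)))"
  proof (rule interval_integral_FTC_nonneg[where F = ?F and A = "?F 0" and B = 0])
    show "(?F has_real_derivative (1 + u) * exp (- (c * u))) (at u)" for u
      using c by (auto intro!: derivative_eq_intros simp: field_simps power2_eq_square)
    show "((?F \<circ> real_of_ereal) \<longlongrightarrow> ?F 0) (at_right 0)"
      unfolding zero_ereal_def ereal_tendsto_simps using c by (intro tendsto_intros) auto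
    show "((?F \<circ> real_of_ereal) \<longlongrightarrow> 0) (at_left \<infinity>)"
      unfolding ereal_tendsto_simps using c by real_asymp
  qed auto
  then show "set_integrable lborel {0<..} (\<lambda>u. K * ((1 + u) * exp (- (c * u))))"
    by (intro set_integrable_mult_right) (simp add: zero_ereal_def)
  show "set_borel_measurable lborel {0<..} (\<lambda>u. exp (- (c * u)) * f u)"
    unfolding set_borel_measurable_def using f by measurable
  show "AE u in lborel. u \<in> {0<..} \<longrightarrow>
      norm (exp (- (c * u)) * f u) \<le> norm (K * ((1 + u) * exp (- (c * u))))"
  proof (intro AE_I2 impI)
    fix u :: real assume "u \<in> {0<..}"
    then have "norm (exp (- (c * u)) * f u) \<le> K * ((1 + u) * exp (- (c * u)))"
      using bound[of u] by (simp add: abs_mult mult_ac)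
    then show "norm (exp (- (c * u)) * f u) \<le> norm (K * ((1 + u) * exp (- (c * u))))"
      by simp
  qed
qed

lemma tendsto_exp_mult_linear_growth:
  fixes G :: "real \<Rightarrow> real"
  assumes c: "c > 0" and bound: "\<And>u. u \<ge> 0 \<Longrightarrow> \<bar>G u\<bar> \<le> K * (1 + u)"
  shows "((\<lambda>u. exp (- (c * u)) * G u) \<longlongrightarrow> 0) at_top"
proof (rule Lim_null_comparison)
  show "\<forall>\<^sub>F u in at_top. norm (exp (- (c * u)) * G u) \<le> K * ((1 + u) * exp (- (c * u)))"
    using eventually_ge_at_top[of "0::real"]
    by eventually_elim (use bound in \<open>auto simp: abs_mult mult_ac\<close>)
  have "((\<lambda>u. (1 + u) * exp (- (c * u))) \<longlongrightarrow> 0) at_top"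
    using c by real_asymp
  then show "((\<lambda>u. K * ((1 + u) * exp (- (c * u)))) \<longlongrightarrow> 0) at_top"
    by (rule tendsto_mult_right_zero)
qed

text \<open>Since \<open>f = c G - G'\<close>, the function \<open>- exp (- c u) G u\<close> is an antiderivative of
  \<open>exp (- c u) f u\<close> that vanishes at infinity.\<close>
lemma has_laplace_transform_antiderivative:
  fixes f G :: "real \<Rightarrow> real"
  assumes c: "c > 0" and f: "continuous_on UNIV f"
    and G: "\<And>u. (G has_real_derivative c * G u - f u) (at u)"
    and f_bound: "\<And>u. u \<ge> 0 \<Longrightarrow> \<bar>f u\<bar> \<le> B * (1 + u)"
    and G_bound: "\<And>u. u \<ge> 0 \<Longrightarrow> \<bar>G u\<bar> \<le> K * (1 + u)"
  shows "has_laplace_transform f c (G 0)"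
proof -
  let ?F = "\<lambda>u. - (exp (- (c * u)) * G u)"
  have int: "set_integrable lborel {0<..} (\<lambda>u. exp (- (c * u)) * f u)"
    using c _ f_bound by (rule set_integrable_exp_mult_linear_growth)
      (use f in \<open>auto intro: borel_measurable_continuous_onI\<close>)
  have deriv: "(?F has_real_derivative exp (- (c * u)) * f u) (at u)" for u
    by (rule derivative_eq_intros G refl | simp)+ (simp add: algebra_simps)
  have "isCont ?F 0"
    using DERIV_isCont[OF deriv] .
  then have at0: "(?F \<longlongrightarrow> ?F 0) (at_right 0)"
    by (simp add: isCont_def filterlim_at_split)
  have "(LBINT u=ereal 0..\<infinity>. exp (- (c * u)) * f u) = 0 - ?F 0"
    by (rule interval_integral_FTC_integrable)
      (use int deriv at0 tendsto_minus[OF tendsto_exp_mult_linear_growth[OF c G_bound]] f in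
        \<open>auto simp: ereal_tendsto_simps continuous_on_eq_continuous_at
          has_real_derivative_iff_has_vector_derivative[symmetric]\<close>)
  then show ?thesis
    using int by (simp add: has_laplace_transform_iff interval_integral_to_infinity_eq)
qed

lemma abs_sin_cos_combination_le:
  fixes p q x y :: real
  shows "\<bar>p * sin x + q * cos y\<bar> \<le> \<bar>p\<bar> + \<bar>q\<bar>"
proof -
  have "\<bar>p * sin x + q * cos y\<bar> \<le> \<bar>p\<bar> * \<bar>sin x\<bar> + \<bar>q\<bar> * \<bar>cos y\<bar>"
    unfolding abs_mult[symmetric] by (rule abs_triangle_ineq)
  also have "\<dots> \<le> \<bar>p\<bar> * 1 + \<bar>q\<bar> * 1"
    by (intro add_mono mult_left_mono) auto
  finally show ?thesis by simp
qed

lemma abs_affine_le_linear_growth: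
  fixes u A B KA KB :: real
  assumes "u \<ge> 0" "\<bar>A\<bar> \<le> KA" "\<bar>B\<bar> \<le> KB"
  shows "\<bar>u * A + B\<bar> \<le> (KA + KB) * (1 + u)"
proof -
  have "\<bar>u * A + B\<bar> \<le> u * \<bar>A\<bar> + \<bar>B\<bar>"
    using assms(1) by (metis abs_mult abs_of_nonneg abs_triangle_ineq)
  also have "\<dots> \<le> u * KA + KB"
    using assms by (intro add_mono mult_left_mono) auto
  also have "\<dots> \<le> (KA + KB) * (1 + u)"
    using assms mult_nonneg_nonneg[of u KB] by (simp add: algebra_simps)
  finally show ?thesis .
qed

lemma has_laplace_transform_1:
  assumes c: "c > 0"
  shows "has_laplace_transform (\<lambda>u. 1) c (1 / c)"
proof -
  have "has_laplace_transform (\<lambda>u. 1) c ((\<lambda>u. 1 / c) 0)"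
  proof (rule has_laplace_transform_antiderivative[where B = 1 and K = "1 / c"])
    show "((\<lambda>u. 1 / c) has_real_derivative c * (1 / c) - 1) (at u)" for u
      using c by simp
    show "\<bar>1 / c\<bar> \<le> 1 / c * (1 + u)" if "u \<ge> 0" for u
      using c that by (simp add: field_simps)
  qed (use c in auto)
  then show ?thesis by simp
qed

lemma has_laplace_transform_cos:
  assumes c: "c > 0"
  shows "has_laplace_transform (\<lambda>u. cos (a * u)) c (c / (a^2 + c^2))"
proof -
  define D where "D = a^2 + c^2"
  have D: "D > 0" using c by (simp add: D_def add_nonneg_pos)
  define G where "G u = ((- a) * sin (a * u) + c * cos (a * u)) / D" for u
  have "has_laplace_transform (\<lambda>u. cos (a * u)) c (G 0)"
  proof (rule has_laplace_transform_antiderivative[where B = 1 and K = "(\<bar>a\<bar> + c) / D"])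
    fix u :: real
    have "(G has_real_derivative ((- a) * (a * cos (a * u)) - c * (a * sin (a * u))) / D) (at u)"
      unfolding G_def using D by (auto intro!: derivative_eq_intros)
    moreover have "((- a) * (a * cos (a * u)) - c * (a * sin (a * u))) / D = c * G u - cos (a * u)"
      unfolding G_def using D by (simp add: field_simps) (unfold D_def, algebra)
    ultimately show "(G has_real_derivative c * G u - cos (a * u)) (at u)"
      by simp
    assume "u \<ge> 0"
    then show "\<bar>G u\<bar> \<le> (\<bar>a\<bar> + c) / D * (1 + u)"
      using abs_affine_le_linear_growth[of u 0 0 "G u" "(\<bar>a\<bar> + c) / D"]
        abs_sin_cos_combination_le[of "- a" "a * u" c "a * u"] D c
      by (simp add: G_def abs_divide divide_right_mono)
    show "\<bar>cos (a * u)\<bar> \<le> 1 * (1 + u)"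
      by (rule order_trans[OF abs_cos_le_one]) (use \<open>u \<ge> 0\<close> in simp)
  qed (use c in \<open>auto intro!: continuous_intros\<close>)
  then show ?thesis by (simp add: G_def D_def)
qed

lemma has_laplace_transform_mult_sin:
  assumes c: "c > 0"
  shows "has_laplace_transform (\<lambda>u. u * sin (a * u)) c (2 * a * c / (a^2 + c^2)^2)"
proof -
  define D where "D = a^2 + c^2"
  have D: "D > 0" using c by (simp add: D_def add_nonneg_pos)
  define A where "A u = (c * sin (a * u) + a * cos (a * u)) / D" for u
  define B where "B u = ((c^2 - a^2) * sin (a * u) + (2 * a * c) * cos (a * u)) / D^2" for u
  define KA where "KA = (\<bar>c\<bar> + \<bar>a\<bar>) / D"
  define KB where "KB = (\<bar>c^2 - a^2\<bar> + \<bar>2 * a * c\<bar>) / D^2"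
  have "has_laplace_transform (\<lambda>u. u * sin (a * u)) c ((\<lambda>u. u * A u + B u) 0)"
  proof (rule has_laplace_transform_antiderivative[where B = 1 and K = "KA + KB"])
    fix u :: real
    let ?G' = "A u + u * ((a * c * cos (a * u) - a^2 * sin (a * u)) / D)
      + (a * (c^2 - a^2) * cos (a * u) - 2 * a^2 * c * sin (a * u)) / D^2"
    have "((\<lambda>u. u * A u + B u) has_real_derivative ?G') (at u)"
      unfolding A_def B_def using D
      by (auto intro!: derivative_eq_intros simp: field_simps power2_eq_square)
    moreover have "?G' = c * (u * A u + B u) - u * sin (a * u)"
      unfolding A_def B_def using D by (simp add: field_simps) (unfold D_def, algebra)
    ultimately show "((\<lambda>u. u * A u + B u) has_real_derivative c * (u * A u + B u) - u * sin (a * u)) (at u)"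
      by simp
    assume u: "u \<ge> 0"
    show "\<bar>u * A u + B u\<bar> \<le> (KA + KB) * (1 + u)"
    proof (rule abs_affine_le_linear_growth[OF u])
      show "\<bar>A u\<bar> \<le> KA"
        using abs_sin_cos_combination_le[of c "a * u" a "a * u"] D
        by (simp add: A_def KA_def abs_divide divide_right_mono)
      show "\<bar>B u\<bar> \<le> KB"
        using abs_sin_cos_combination_le[of "c^2 - a^2" "a * u" "2 * a * c" "a * u"] D
        by (simp add: B_def KB_def abs_divide divide_right_mono)
    qed
    show "\<bar>u * sin (a * u)\<bar> \<le> 1 * (1 + u)"
      using u mult_left_le[OF abs_sin_le_one[of "a * u"] u] by (simp add: abs_mult)
  qed (use c in \<open>auto intro!: continuous_intros\<close>)
  then show ?thesis by (simp add: B_def D_def)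
qed

section \<open>A kernel with Laplace transform \<open>1 / quintic\<close>\<close>

definition quintic :: "real \<Rightarrow> real \<Rightarrow> real \<Rightarrow> real" where
  "quintic a b c = c * (c^2 + a^2) * (c^2 + b^2)"

lemma quintic_factorization:
  fixes r y1 y2 t :: real
  shows "(complex_of_real t - complex_of_real r) *
           (\<Prod>j\<in>{1..2::nat}.
              (complex_of_real t - (complex_of_real r + \<i> * complex_of_real (if j = 1 then y1 else y2))) *
              (complex_of_real t - (complex_of_real r - \<i> * complex_of_real (if j = 1 then y1 else y2))))
         = complex_of_real (quintic y1 y2 (t - r))"
proof -
  have "{1..2::nat} = {1, 2}" by auto
  moreover have "(w - (v + \<i> * y)) * (w - (v - \<i> * y)) = (w - v)^2 + y^2" for w v y :: complex
    by (simp add: algebra_simps power2_eq_square)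
  ultimately show ?thesis by (simp add: quintic_def)
qed

definition quintic_kernel :: "real \<Rightarrow> real \<Rightarrow> real \<Rightarrow> real" where
  "quintic_kernel a b u =
     (if a = b then (1 - cos (a * u)) / a^4 - u * sin (a * u) / (2 * a^3)
      else ((1 - cos (a * u)) / a^2 - (1 - cos (b * u)) / b^2) / (b^2 - a^2))"

lemma has_laplace_transform_quintic_kernel:
  assumes c: "c > 0" and a: "a > 0" and b: "b > 0"
  shows "has_laplace_transform (quintic_kernel a b) c (1 / quintic a b c)"
proof (cases "a = b")
  case True
  have "has_laplace_transform
      (\<lambda>u. 1 / a^4 * 1 - 1 / a^4 * cos (a * u) - 1 / (2 * a^3) * (u * sin (a * u))) c
      (1 / a^4 * (1 / c) - 1 / a^4 * (c / (a^2 + c^2)) - 1 / (2 * a^3) * (2 * a * c / (a^2 + c^2)^2))"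
    by (intro has_laplace_transform_diff has_laplace_transform_cmult has_laplace_transform_1
        has_laplace_transform_cos has_laplace_transform_mult_sin c)
  moreover have "(\<lambda>u. 1 / a^4 * 1 - 1 / a^4 * cos (a * u) - 1 / (2 * a^3) * (u * sin (a * u)))
      = quintic_kernel a b"
    using True a by (auto simp: fun_eq_iff quintic_kernel_def field_simps)
  moreover have "1 / a^4 * (1 / c) - 1 / a^4 * (c / (a^2 + c^2)) - 1 / (2 * a^3) * (2 * a * c / (a^2 + c^2)^2)
      = 1 / quintic a b c"
  proof -
    define D where "D = a^2 + c^2"
    have D: "D > 0" using c by (simp add: D_def add_nonneg_pos)
    have P: "quintic a b c = c * D * D" using True by (simp add: quintic_def D_def add.commute)
    show ?thesis
      unfolding P D_def[symmetric] using a c D by (simp add: field_simps) (unfold D_def, algebra)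
  qed
  ultimately show ?thesis by simp
next
  case False
  define E where "E = b^2 - a^2"
  have E: "E \<noteq> 0" using False a b by (simp add: E_def power2_eq_iff)
  have "has_laplace_transform
      (\<lambda>u. (1 / (a^2 * E) - 1 / (b^2 * E)) * 1 - 1 / (a^2 * E) * cos (a * u)
        + 1 / (b^2 * E) * cos (b * u)) c
      ((1 / (a^2 * E) - 1 / (b^2 * E)) * (1 / c) - 1 / (a^2 * E) * (c / (a^2 + c^2))
        + 1 / (b^2 * E) * (c / (b^2 + c^2)))"
    by (intro has_laplace_transform_add has_laplace_transform_diff has_laplace_transform_cmult
        has_laplace_transform_1 has_laplace_transform_cos c)
  moreover have "(\<lambda>u. (1 / (a^2 * E) - 1 / (b^2 * E)) * 1 - 1 / (a^2 * E) * cos (a * u)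
        + 1 / (b^2 * E) * cos (b * u)) = quintic_kernel a b"
    using False a b E
    by (auto simp: fun_eq_iff quintic_kernel_def E_def[symmetric] field_simps) (simp add: E_def)
  moreover have "(1 / (a^2 * E) - 1 / (b^2 * E)) * (1 / c) - 1 / (a^2 * E) * (c / (a^2 + c^2))
        + 1 / (b^2 * E) * (c / (b^2 + c^2)) = 1 / quintic a b c"
  proof -
    define A2 where "A2 = a^2 + c^2"
    define B2 where "B2 = b^2 + c^2"
    have A2: "A2 > 0" and B2: "B2 > 0" using c by (simp_all add: A2_def B2_def add_nonneg_pos)
    have P: "quintic a b c = c * A2 * B2" by (simp add: quintic_def A2_def B2_def add.commute)
    show ?thesis
      unfolding P A2_def[symmetric] B2_def[symmetric] using a b c E A2 B2
      by (simp add: field_simps) (unfold E_def A2_def B2_def, algebra)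
  qed
  ultimately show ?thesis by simp
qed

lemma continuous_on_quintic_kernel:
  assumes "a > 0" "b > 0"
  shows "continuous_on UNIV (quintic_kernel a b)"
proof (cases "a = b")
  case True
  then have "quintic_kernel a b = (\<lambda>u. (1 - cos (a * u)) / a^4 - u * sin (a * u) / (2 * a^3))"
    by (auto simp: fun_eq_iff quintic_kernel_def)
  then show ?thesis using assms by (auto intro!: continuous_intros)
next
  case False
  then have "quintic_kernel a b = (\<lambda>u. ((1 - cos (a * u)) / a^2 - (1 - cos (b * u)) / b^2) / (b^2 - a^2))"
    by (auto simp: fun_eq_iff quintic_kernel_def)
  then show ?thesis using assms False by (auto intro!: continuous_intros simp: power2_eq_iff)
qed

lemma abs_sin_of_nat_mult_le: "\<bar>sin (real k * y)\<bar> \<le> real k * \<bar>sin y\<bar>"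
proof (induction k)
  case 0
  then show ?case by simp
next
  case (Suc k)
  have "\<bar>sin (real (Suc k) * y)\<bar> = \<bar>sin y * cos (real k * y) + cos y * sin (real k * y)\<bar>"
    by (simp add: distrib_right sin_add)
  also have "\<dots> \<le> \<bar>sin y\<bar> * \<bar>cos (real k * y)\<bar> + \<bar>cos y\<bar> * \<bar>sin (real k * y)\<bar>"
    unfolding abs_mult[symmetric] by (rule abs_triangle_ineq)
  also have "\<dots> \<le> \<bar>sin y\<bar> * 1 + 1 * \<bar>sin (real k * y)\<bar>"
    by (intro add_mono mult_mono) auto
  also have "\<dots> \<le> real (Suc k) * \<bar>sin y\<bar>"
    using Suc.IH by (simp add: algebra_simps)
  finally show ?case .
qed

text \<open>With \<open>1 - cos (2 y) = 2 sin\<^sup>2 y\<close>, nonnegativity for \<open>b = k a\<close> reduces to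
  \<open>\<bar>sin (k y)\<bar> \<le> k \<bar>sin y\<bar>\<close>.\<close>
lemma quintic_kernel_nonneg_if_multiple:
  assumes a: "a > 0" and k: "k \<ge> 2" and b: "b = real k * a"
  shows "quintic_kernel a b u \<ge> 0"
proof -
  define y where "y = a * u / 2"
  have k1: "real k > 1" using k by simp
  then have "a \<noteq> b" "b^2 - a^2 > 0"
    using a b by (auto simp: power_mult_distrib)
  have "(1 - cos (b * u)) / b^2 = 2 * (sin (real k * y))^2 / ((real k)^2 * a^2)"
    using cos_double_sin[of "real k * y"] by (simp add: b y_def power_mult_distrib algebra_simps)
  also have "\<dots> \<le> 2 * ((real k)^2 * (sin y)^2) / ((real k)^2 * a^2)"
    using power_mono[OF abs_sin_of_nat_mult_le[of k y], of 2]
    by (intro divide_right_mono) (auto simp: power_mult_distrib)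
  also have "\<dots> = (1 - cos (a * u)) / a^2"
    using cos_double_sin[of y] k1 by (simp add: y_def)
  finally show ?thesis
    using \<open>a \<noteq> b\<close> \<open>b^2 - a^2 > 0\<close> by (simp add: quintic_kernel_def divide_nonneg_pos)
qed

lemma quintic_kernel_diagonal_neg:
  assumes a: "a > 0"
  shows "quintic_kernel a a (5 * pi / (2 * a)) < 0"
proof -
  have "a * (5 * pi / (2 * a)) = pi / 2 + 2 * pi" using a by (simp add: field_simps)
  then have "cos (a * (5 * pi / (2 * a))) = 0" "sin (a * (5 * pi / (2 * a))) = 1"
    by (simp_all only: sin_periodic cos_periodic cos_pi_half sin_pi_half)
  then have "quintic_kernel a a (5 * pi / (2 * a)) = (1 - 5 * pi / 4) / a^4"
    using a by (simp add: quintic_kernel_def field_simps power_def)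
  also have "\<dots> < 0" using a pi_gt3 by (intro divide_neg_pos) auto
  finally show ?thesis .
qed

lemma quintic_kernel_neg_if_not_multiple:
  assumes a: "a > 0" and ab: "a < b" and not_multiple: "b / a \<notin> \<nat>"
  shows "quintic_kernel a b (2 * pi / a) < 0"
proof -
  have "cos (b * (2 * pi / a)) \<noteq> 1"
  proof
    assume "cos (b * (2 * pi / a)) = 1"
    then obtain n :: int where "b * (2 * pi / a) = n * 2 * pi" by (auto simp: cos_one_2pi_int)
    then have "b / a = n" using a by (simp add: field_simps)
    moreover have "b / a > 0" using a ab by simp
    ultimately have "b / a = real (nat n)" by simp
    then show False using not_multiple by (metis of_nat_in_Nats)
  qed
  then have "1 - cos (b * (2 * pi / a)) > 0" using cos_le_one[of "b * (2 * pi / a)"] by linarith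
  moreover have "b^2 - a^2 > 0" using a ab by (simp add: power_strict_mono)
  moreover have "quintic_kernel a b (2 * pi / a) = - ((1 - cos (b * (2 * pi / a))) / b^2) / (b^2 - a^2)"
    using ab a by (simp add: quintic_kernel_def)
  ultimately show ?thesis using ab a by (simp add: divide_neg_pos)
qed

lemma quintic_kernel_nonneg_iff:
  assumes a: "a > 0" and ab: "a \<le> b"
  shows "(\<forall>u>0. quintic_kernel a b u \<ge> 0) \<longleftrightarrow> b / a \<in> \<nat> \<and> b / a > 1"
proof
  assume nonneg: "\<forall>u>0. quintic_kernel a b u \<ge> 0"
  have "a \<noteq> b"
  proof
    assume "a = b"
    moreover have "5 * pi / (2 * a) > 0" using a by simp
    ultimately show False
      using nonneg quintic_kernel_diagonal_neg[OF a] by (metis not_le)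
  qed
  then have "a < b" using ab by simp
  moreover have "b / a \<in> \<nat>"
  proof (rule ccontr)
    assume "b / a \<notin> \<nat>"
    moreover have "2 * pi / a > 0" using a by simp
    ultimately show False
      using nonneg quintic_kernel_neg_if_not_multiple[OF a \<open>a < b\<close>] by (metis not_le)
  qed
  ultimately show "b / a \<in> \<nat> \<and> b / a > 1" using a by simp
next
  assume "b / a \<in> \<nat> \<and> b / a > 1"
  then obtain k :: nat where k: "b / a = real k" "k \<ge> 2" by (auto elim!: Nats_cases)
  then have "b = real k * a" using a by (simp add: field_simps)
  then show "\<forall>u>0. quintic_kernel a b u \<ge> 0"
    using quintic_kernel_nonneg_if_multiple[OF a k(2)] by blast
qed

section \<open>Moments of images under \<open>u \<mapsto> e\<^sup>-\<^sup>u\<close>\<close>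

definition unit_interval_measure :: "real measure \<Rightarrow> bool" where
  "unit_interval_measure \<mu> \<longleftrightarrow>
     space \<mu> = {0..1} \<and> sets \<mu> = sets (restrict_space borel {0..1}) \<and> finite_measure \<mu>"

lemma hausdorff_moment_seq_iff:
  "hausdorff_moment_seq x \<longleftrightarrow>
     (\<forall>n. x n > 0) \<and> (\<exists>\<mu>. unit_interval_measure \<mu> \<and> (\<forall>n. x n = (\<integral>t. t ^ n \<partial>\<mu>)))"
  unfolding hausdorff_moment_seq_def unit_interval_measure_def by blast

lemma integrable_unit_interval_measure:
  fixes h :: "real \<Rightarrow> real"
  assumes \<mu>: "unit_interval_measure \<mu>" and h: "continuous_on {0..1} h"
  shows "integrable \<mu> h"
proof -
  have sets: "sets \<mu> = sets (restrict_space borel {0..1})" and fin: "finite_measure \<mu>"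
    using \<mu> by (simp_all add: unit_interval_measure_def)
  have "h \<in> borel_measurable \<mu>"
    using borel_measurable_continuous_on_restrict[OF h] unfolding measurable_cong_sets[OF sets refl] .
  moreover obtain B where "\<And>t. t \<in> {0..1} \<Longrightarrow> norm (h t) \<le> B"
    using continuous_on_compact_bound[OF compact_Icc h] by blast
  then have "AE t in \<mu>. norm (h t) \<le> B"
    using \<mu> by (intro AE_I2) (simp add: unit_interval_measure_def)
  ultimately show ?thesis
    using finite_measure.integrable_const_bound[OF fin] by blast
qed

lemma abs_integral_unit_interval_le:
  fixes h :: "real \<Rightarrow> real"
  assumes \<mu>: "unit_interval_measure \<mu>" and h: "continuous_on {0..1} h"
    and bound: "\<And>t. t \<in> {0..1} \<Longrightarrow> \<bar>h t\<bar> \<le> B"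
  shows "\<bar>\<integral>t. h t \<partial>\<mu>\<bar> \<le> B * measure \<mu> {0..1}"
proof -
  have space: "space \<mu> = {0..1}" and fin: "finite_measure \<mu>"
    using \<mu> by (simp_all add: unit_interval_measure_def)
  have "\<bar>\<integral>t. h t \<partial>\<mu>\<bar> \<le> (\<integral>t. B \<partial>\<mu>)"
    using integrable_unit_interval_measure[OF \<mu> h] finite_measure.integrable_const[OF fin] bound
    by (intro integral_abs_bound_integral) (auto simp: space)
  then show ?thesis by (simp add: space mult.commute)
qed

lemma set_integrable_exp_image:
  fixes g h :: "real \<Rightarrow> real"
  assumes g: "set_integrable lborel {0<..} g" and h: "continuous_on {0..1} h"
  shows "set_integrable lborel {0<..} (\<lambda>u. h (exp (- u)) * g u)"
proof -
  obtain B where B: "B \<ge> 0" "\<And>t. t \<in> {0..1} \<Longrightarrow> norm (h t) \<le> B"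
    using continuous_on_compact_bound[OF compact_Icc h] by blast
  have "continuous_on {0<..} (\<lambda>u. h (exp (- u)))"
    by (intro continuous_intros continuous_on_compose2[OF h]) auto
  then have "(\<lambda>u. indicator {0<..} u *\<^sub>R h (exp (- u))) \<in> borel_measurable lborel"
    unfolding measurable_lborel2 by (intro borel_measurable_continuous_on_indicator) auto
  moreover have "(\<lambda>u. indicator {0<..} u *\<^sub>R g u) \<in> borel_measurable lborel"
    using g unfolding set_integrable_def by (rule borel_measurable_integrable)
  ultimately have "set_borel_measurable lborel {0<..} (\<lambda>u. h (exp (- u)) * g u)"
    unfolding set_borel_measurable_def
    by (rule measurable_cong[THEN iffD1, rotated, OF borel_measurable_times])
      (auto simp: indicator_def)
  moreover have "AE u in lborel. u \<in> {0<..} \<longrightarrow> norm (h (exp (- u)) * g u) \<le> norm (B * g u)"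
  proof (intro AE_I2 impI)
    fix u :: real assume "u \<in> {0<..}"
    then have "\<bar>h (exp (- u))\<bar> \<le> B" using B(2)[of "exp (- u)"] by simp
    then show "norm (h (exp (- u)) * g u) \<le> norm (B * g u)"
      using B(1) by (simp add: abs_mult mult_right_mono)
  qed
  ultimately show ?thesis
    using set_integrable_mult_right[OF g, of B] by (rule set_integrable_bound[rotated])
qed

lemma abs_exp_image_integral_le:
  fixes g h :: "real \<Rightarrow> real"
  assumes g: "set_integrable lborel {0<..} g"
    and h: "continuous_on {0..1} h" and bound: "\<And>t. t \<in> {0..1} \<Longrightarrow> \<bar>h t\<bar> \<le> B"
  shows "\<bar>LBINT u:{0<..}. h (exp (- u)) * g u\<bar> \<le> B * (LBINT u:{0<..}. \<bar>g u\<bar>)"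
proof -
  have "\<bar>LBINT u:{0<..}. h (exp (- u)) * g u\<bar> \<le> (LBINT u:{0<..}. B * \<bar>g u\<bar>)"
    unfolding set_lebesgue_integral_def
  proof (rule integral_abs_bound_integral)
    show "integrable lborel (\<lambda>u. indicator {0<..} u *\<^sub>R (h (exp (- u)) * g u))"
      using set_integrable_exp_image[OF g h] by (simp add: set_integrable_def)
    show "integrable lborel (\<lambda>u. indicator {0<..} u *\<^sub>R (B * \<bar>g u\<bar>))"
      using set_integrable_mult_right[OF set_integrable_abs[OF g], of B]
      by (simp add: set_integrable_def)
    fix u :: real
    show "\<bar>indicator {0<..} u *\<^sub>R (h (exp (- u)) * g u)\<bar> \<le> indicator {0<..} u *\<^sub>R (B * \<bar>g u\<bar>)"
      using bound[of "exp (- u)"]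
      by (cases "u > 0") (auto simp: abs_mult intro: mult_right_mono)
  qed
  then show ?thesis by simp
qed

lemma integral_polynomial_eq_exp_image:
  fixes g q :: "real \<Rightarrow> real"
  assumes \<mu>: "unit_interval_measure \<mu>"
    and g: "set_integrable lborel {0<..} g"
    and moments: "\<And>n. (\<integral>t. t ^ n \<partial>\<mu>) = (LBINT u:{0<..}. exp (- u) ^ n * g u)"
    and q: "polynomial_function q"
  shows "(\<integral>t. q t \<partial>\<mu>) = (LBINT u:{0<..}. q (exp (- u)) * g u)"
proof -
  obtain c N where q_eq: "q = (\<lambda>t. \<Sum>i\<le>N. c i * t ^ i)"
    using q unfolding real_polynomial_function_eq[symmetric] real_polynomial_function_iff_sum
    by blast
  have int_exp: "integrable lborel (\<lambda>u. indicator {0<..} u *\<^sub>R (exp (- u) ^ i * g u))" for i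
  proof -
    have "continuous_on {0..1} (\<lambda>t::real. t ^ i)" by (intro continuous_intros)
    then show ?thesis
      using set_integrable_exp_image[OF g] by (simp add: set_integrable_def)
  qed
  have "(\<integral>t. q t \<partial>\<mu>) = (\<Sum>i\<le>N. c i * (\<integral>t. t ^ i \<partial>\<mu>))"
    unfolding q_eq
    by (subst Bochner_Integration.integral_sum) (auto intro!: integrable_unit_interval_measure[OF \<mu>] continuous_intros)
  also have "\<dots> = (\<Sum>i\<le>N. c i * (LBINT u:{0<..}. exp (- u) ^ i * g u))"
    by (simp add: moments)
  also have "\<dots> = (LBINT u. (\<Sum>i\<le>N. c i * (indicator {0<..} u *\<^sub>R (exp (- u) ^ i * g u))))"
    unfolding set_lebesgue_integral_def
    by (subst Bochner_Integration.integral_sum) (auto simp: int_exp[unfolded real_scaleR_def])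
  also have "\<dots> = (LBINT u:{0<..}. q (exp (- u)) * g u)"
    unfolding set_lebesgue_integral_def q_eq
    by (intro Bochner_Integration.integral_cong refl) (simp add: sum_distrib_left sum_distrib_right mult_ac)
  finally show ?thesis .
qed

lemma abs_integral_diff_exp_image_le:
  fixes g h q :: "real \<Rightarrow> real"
  assumes \<mu>: "unit_interval_measure \<mu>"
    and g: "set_integrable lborel {0<..} g"
    and moments: "\<And>n. (\<integral>t. t ^ n \<partial>\<mu>) = (LBINT u:{0<..}. exp (- u) ^ n * g u)"
    and h: "continuous_on {0..1} h" and q: "polynomial_function q"
    and close: "\<And>t. t \<in> {0..1} \<Longrightarrow> \<bar>h t - q t\<bar> \<le> \<epsilon>"
  shows "\<bar>(\<integral>t. h t \<partial>\<mu>) - (LBINT u:{0<..}. h (exp (- u)) * g u)\<bar>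
    \<le> \<epsilon> * (measure \<mu> {0..1} + (LBINT u:{0<..}. \<bar>g u\<bar>))"
proof -
  have q_cont: "continuous_on {0..1} q"
    using q by (rule continuous_on_polymonial_function)
  have d_cont: "continuous_on {0..1} (\<lambda>t. h t - q t)"
    using h q_cont by (rule continuous_on_diff)
  have "(\<integral>t. h t \<partial>\<mu>) - (LBINT u:{0<..}. h (exp (- u)) * g u)
      = (\<integral>t. h t - q t \<partial>\<mu>) - (LBINT u:{0<..}. (h (exp (- u)) - q (exp (- u))) * g u)"
    unfolding left_diff_distrib
    using integral_polynomial_eq_exp_image[OF \<mu> g moments q]
      integrable_unit_interval_measure[OF \<mu>] set_integrable_exp_image[OF g] h q_cont
    by (simp add: Bochner_Integration.integral_diff set_integral_diff(2))
  also have "\<bar>\<dots>\<bar> \<le> \<epsilon> * measure \<mu> {0..1} + \<epsilon> * (LBINT u:{0<..}. \<bar>g u\<bar>)"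
    using abs_integral_unit_interval_le[OF \<mu> d_cont close]
      abs_exp_image_integral_le[OF g d_cont close]
    by linarith
  finally show ?thesis by (simp add: distrib_left)
qed

lemma integral_eq_exp_image_integral:
  fixes g h :: "real \<Rightarrow> real"
  assumes \<mu>: "unit_interval_measure \<mu>"
    and g: "set_integrable lborel {0<..} g"
    and moments: "\<And>n. (\<integral>t. t ^ n \<partial>\<mu>) = (LBINT u:{0<..}. exp (- u) ^ n * g u)"
    and h: "continuous_on {0..1} h"
  shows "(\<integral>t. h t \<partial>\<mu>) = (LBINT u:{0<..}. h (exp (- u)) * g u)"
proof -
  define C where "C = measure \<mu> {0..1} + (LBINT u:{0<..}. \<bar>g u\<bar>)"
  have "C \<ge> 0"
    unfolding C_def set_lebesgue_integral_def by (intro add_nonneg_nonneg integral_nonneg_AE) auto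
  have "\<bar>(\<integral>t. h t \<partial>\<mu>) - (LBINT u:{0<..}. h (exp (- u)) * g u)\<bar> \<le> 0"
  proof (rule field_le_epsilon)
    fix e :: real assume "e > 0"
    then have "e / (C + 1) > 0" using \<open>C \<ge> 0\<close> by simp
    from Stone_Weierstrass_polynomial_function[OF compact_Icc h this]
    obtain q where "polynomial_function q" "\<And>t. t \<in> {0..1} \<Longrightarrow> \<bar>h t - q t\<bar> < e / (C + 1)"
      by auto
    then have "\<bar>(\<integral>t. h t \<partial>\<mu>) - (LBINT u:{0<..}. h (exp (- u)) * g u)\<bar> \<le> e / (C + 1) * C"
      unfolding C_def by (intro abs_integral_diff_exp_image_le[OF \<mu> g moments h]) (auto intro: less_imp_le)
    also have "\<dots> \<le> 0 + e"
      using \<open>e > 0\<close> \<open>C \<ge> 0\<close> by (simp add: field_simps)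
    finally show "\<bar>(\<integral>t. h t \<partial>\<mu>) - (LBINT u:{0<..}. h (exp (- u)) * g u)\<bar> \<le> 0 + e" .
  qed
  then show ?thesis by simp
qed

lemma set_integral_pos_if_continuous:
  fixes k :: "real \<Rightarrow> real"
  assumes int: "set_integrable lborel {a<..} k" and cont: "continuous_on {a<..} k"
    and nonneg: "\<And>u. u > a \<Longrightarrow> k u \<ge> 0" and u0: "u0 > a" "k u0 > 0"
  shows "(LBINT u:{a<..}. k u) > 0"
proof -
  have cont': "continuous_on {u0..u0 + 1} k"
    using cont by (rule continuous_on_subset) (use u0 in auto)
  have int': "set_integrable lborel {u0..u0 + 1} k"
    unfolding set_integrable_def by (rule borel_integrable_compact[OF compact_Icc cont'])
  have "integral {u0..u0 + 1} k \<ge> 0"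
    using set_borel_integral_eq_integral(1)[OF int'] nonneg u0 by (intro integral_nonneg) auto
  moreover have "integral {u0..u0 + 1} k \<noteq> 0"
    using integral_eq_0_iff[OF cont'] nonneg u0 by force
  ultimately have "0 < integral {u0..u0 + 1} k" by simp
  also have "\<dots> = (LBINT u:{u0..u0 + 1}. k u)"
    by (rule set_borel_integral_eq_integral(2)[OF int', symmetric])
  also have "\<dots> \<le> (LBINT u:{a<..}. k u)"
    unfolding set_lebesgue_integral_def
    using int int' nonneg u0
    by (intro integral_mono) (auto simp: set_integrable_def indicator_def)
  finally show ?thesis .
qed

lemma hausdorff_moment_seq_exp_image:
  fixes g :: "real \<Rightarrow> real" and x :: "nat \<Rightarrow> real"
  assumes g: "set_integrable lborel {0<..} g" and nonneg: "\<And>u. u > 0 \<Longrightarrow> g u \<ge> 0"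
    and moments: "\<And>n. x n = (LBINT u:{0<..}. exp (- u) ^ n * g u)"
    and pos: "\<And>n. x n > 0"
  shows "hausdorff_moment_seq x"
proof -
  define w where "w = (\<lambda>u. indicator {0<..} u * g u)"
  have w_nonneg: "w u \<ge> 0" for u
    using nonneg by (simp add: w_def indicator_def)
  have w_int: "integrable lborel w"
    using g by (simp add: set_integrable_def w_def)
  then have w_meas: "w \<in> borel_measurable lborel" by (rule borel_measurable_integrable)
  define M where "M = density lborel w"
  define \<mu> where "\<mu> = distr M (restrict_space borel {0..1}) (\<lambda>u. exp (- \<bar>u\<bar>))"
  have exp_meas: "(\<lambda>u. exp (- \<bar>u\<bar>)) \<in> measurable M (restrict_space borel {0..1::real})"
    unfolding M_def by (rule measurable_restrict_space2) auto
  have "finite_measure M"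
  proof (rule finite_measureI)
    have "emeasure M (space M) = (\<integral>\<^sup>+ u. ennreal (w u) \<partial>lborel)"
      unfolding M_def using w_meas by (simp add: emeasure_density)
    also have "\<dots> = ennreal (integral\<^sup>L lborel w)"
      using w_int w_nonneg by (intro nn_integral_eq_integral) auto
    finally show "emeasure M (space M) \<noteq> \<infinity>" by simp
  qed
  then have \<mu>: "unit_interval_measure \<mu>"
    unfolding unit_interval_measure_def \<mu>_def
    using finite_measure.finite_measure_distr[OF _ exp_meas] by simp
  have "x n = (\<integral>t. t ^ n \<partial>\<mu>)" for n
  proof -
    have "(\<integral>t. t ^ n \<partial>\<mu>) = (\<integral>u. exp (- \<bar>u\<bar>) ^ n \<partial>M)"
      unfolding \<mu>_def
      by (rule integral_distr[OF exp_meas], rule measurable_restrict_space1) measurable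
    also have "\<dots> = (\<integral>u. w u *\<^sub>R exp (- \<bar>u\<bar>) ^ n \<partial>lborel)"
      unfolding M_def by (rule integral_density) (use w_meas w_nonneg in auto)
    also have "\<dots> = x n"
      unfolding moments set_lebesgue_integral_def
      by (rule Bochner_Integration.integral_cong) (auto simp: w_def indicator_def)
    finally show ?thesis ..
  qed
  then show ?thesis
    unfolding hausdorff_moment_seq_iff using pos \<mu> by blast
qed

text \<open>The test function is \<open>h t = (t - e\<^sub>0)\<^sup>+ g\<^sup>-(- ln t)\<close> with
  \<open>0 < e\<^sub>0 < exp (- u\<^sub>0)\<close>: then \<open>h (e\<^sup>-\<^sup>u) g u = - (e\<^sup>-\<^sup>u - e\<^sub>0)\<^sup>+ (g\<^sup>- u)\<^sup>2\<close>
  is nonpositive and negative at \<open>u\<^sub>0\<close>.\<close>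
lemma exp_image_integral_negE:
  fixes g :: "real \<Rightarrow> real"
  assumes g: "continuous_on {0..} g" "set_integrable lborel {0<..} g"
    and u0: "u0 > 0" "g u0 < 0"
  obtains h where "continuous_on {0..1} h" "\<And>t. h t \<ge> 0"
    "(LBINT u:{0<..}. h (exp (- u)) * g u) < 0"
proof
  define e0 where "e0 = exp (- (u0 + 1))"
  define g_minus where "g_minus u = max 0 (- g u)" for u
  define h where "h t = max 0 (t - e0) * g_minus (- ln (max t e0))" for t
  define k where "k u = max 0 (exp (- u) - e0) * (g_minus u)^2" for u
  have e0: "0 < e0" "e0 < 1" using u0 by (auto simp: e0_def)
  have g_minus_cont: "continuous_on {0..} g_minus"
    unfolding g_minus_def using g(1) by (intro continuous_intros)
  show h_cont: "continuous_on {0..1} h"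
    unfolding h_def using e0
    by (intro continuous_intros continuous_on_compose2[OF g_minus_cont]) (auto simp: ln_ge_zero_iff)
  show "h t \<ge> 0" for t
    by (simp add: h_def g_minus_def)
  have hk: "h (exp (- u)) * g u = - k u" for u
  proof (cases "exp (- u) > e0")
    case True
    then have "max (exp (- u)) e0 = exp (- u)" by simp
    moreover have "g_minus u * g u = - ((g_minus u)^2)"
      by (simp add: g_minus_def max_def power2_eq_square)
    ultimately show ?thesis
      using True by (simp add: h_def k_def mult.assoc)
  next
    case False
    then show ?thesis by (simp add: h_def k_def)
  qed
  have "set_integrable lborel {0<..} (\<lambda>u. (- 1) * (h (exp (- u)) * g u))"
    using set_integrable_exp_image[OF g(2) h_cont] by (intro set_integrable_mult_right)
  then have k_int: "set_integrable lborel {0<..} k"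
    by (simp only: hk mult_minus1 minus_minus)
  moreover have "continuous_on {0<..} k"
    unfolding k_def using g_minus_cont
    by (intro continuous_intros) (auto intro: continuous_on_subset)
  moreover have "k u0 > 0"
    using u0 by (simp add: k_def e0_def g_minus_def)
  ultimately have "(LBINT u:{0<..}. k u) > 0"
    using set_integral_pos_if_continuous[of 0 k u0] u0 by (simp add: k_def)
  then show "(LBINT u:{0<..}. h (exp (- u)) * g u) < 0"
    unfolding hk set_integral_uminus[OF k_int] by simp
qed

lemma exp_image_density_nonneg:
  fixes g :: "real \<Rightarrow> real" and x :: "nat \<Rightarrow> real"
  assumes g: "continuous_on {0..} g" "set_integrable lborel {0<..} g"
    and hms: "hausdorff_moment_seq x"
    and moments: "\<And>n. x n = (LBINT u:{0<..}. exp (- u) ^ n * g u)"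
    and u0: "u0 > 0"
  shows "g u0 \<ge> 0"
proof (rule ccontr)
  assume "\<not> g u0 \<ge> 0"
  then obtain h where h: "continuous_on {0..1} h" "\<And>t. h t \<ge> 0"
    and neg: "(LBINT u:{0<..}. h (exp (- u)) * g u) < 0"
    using exp_image_integral_negE[OF g u0] by auto
  obtain \<mu> where \<mu>: "unit_interval_measure \<mu>" and \<mu>_moments: "\<And>n. x n = (\<integral>t. t ^ n \<partial>\<mu>)"
    using hms unfolding hausdorff_moment_seq_iff by blast
  have "0 \<le> (\<integral>t. h t \<partial>\<mu>)"
    using h(2) by (intro integral_nonneg_AE) simp
  also have "\<dots> = (LBINT u:{0<..}. h (exp (- u)) * g u)"
    using \<mu> g(2) _ h(1) by (rule integral_eq_exp_image_integral) (use moments \<mu>_moments in metis)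
  finally show False using neg by simp
qed

lemma hausdorff_moment_seq_exp_image_iff:
  fixes g :: "real \<Rightarrow> real" and x :: "nat \<Rightarrow> real"
  assumes g: "continuous_on {0..} g" "set_integrable lborel {0<..} g"
    and moments: "\<And>n. x n = (LBINT u:{0<..}. exp (- u) ^ n * g u)"
    and pos: "\<And>n. x n > 0"
  shows "hausdorff_moment_seq x \<longleftrightarrow> (\<forall>u>0. g u \<ge> 0)"
  using exp_image_density_nonneg[OF g _ moments] hausdorff_moment_seq_exp_image[OF g(2) _ moments pos]
  by blast

lemma exp_image_moment_eq_laplace:
  assumes "has_laplace_transform f (s + real n) L"
  shows "(LBINT u:{0<..}. exp (- u) ^ n * (exp (- (s * u)) * f u)) = L"
proof -
  have "exp (- ((s + real n) * u)) = exp (- u) ^ n * exp (- (s * u))" for u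
    by (simp add: exp_of_nat_mult[symmetric] exp_add[symmetric] algebra_simps)
  then show ?thesis
    using assms by (simp add: has_laplace_transform_iff mult.assoc)
qed

lemma hausdorff_moment_seq_inverse_quintic_iff:
  fixes x :: "nat \<Rightarrow> real"
  assumes s: "s > 0" and a: "a > 0" and ab: "a \<le> b"
    and x: "\<And>n. x n = 1 / quintic a b (s + real n)"
  shows "hausdorff_moment_seq x \<longleftrightarrow> (b / a \<in> \<nat> \<and> b / a > 1)"
proof -
  define g where "g = (\<lambda>u. exp (- (s * u)) * quintic_kernel a b u)"
  have b: "b > 0" using a ab by simp
  have laplace: "has_laplace_transform (quintic_kernel a b) (s + real n) (1 / quintic a b (s + real n))" for n
    using s a b by (intro has_laplace_transform_quintic_kernel) auto
  have moments: "x n = (LBINT u:{0<..}. exp (- u) ^ n * g u)" for n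
    unfolding x g_def using laplace by (rule exp_image_moment_eq_laplace[symmetric])
  have "set_integrable lborel {0<..} g"
    using laplace[of 0] by (simp add: has_laplace_transform_iff g_def)
  moreover have "continuous_on {0..} g"
    unfolding g_def using continuous_on_quintic_kernel[OF a b]
    by (intro continuous_intros) (auto intro: continuous_on_subset)
  moreover have "x n > 0" for n
    using s a by (simp add: x quintic_def add_pos_nonneg)
  ultimately have "hausdorff_moment_seq x \<longleftrightarrow> (\<forall>u>0. g u \<ge> 0)"
    using moments by (intro hausdorff_moment_seq_exp_image_iff)
  also have "\<dots> \<longleftrightarrow> (\<forall>u>0. quintic_kernel a b u \<ge> 0)"
    by (simp add: g_def zero_le_mult_iff)
  also have "\<dots> \<longleftrightarrow> (b / a \<in> \<nat> \<and> b / a > 1)"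
    using a ab by (rule quintic_kernel_nonneg_iff)
  finally show ?thesis .
qed

theorem mainTheorem9:
  fixes r y1 y2 :: real
    and p :: "complex \<Rightarrow> complex"
    and x :: "nat \<Rightarrow> real"
  assumes "r < 0" and "0 < y1" and "y1 \<le> y2"
    and "\<And>z. p z = (z - complex_of_real r) *
           (\<Prod>j\<in>{1..2::nat}.
              (z - (complex_of_real r + \<i> * complex_of_real (if j = 1 then y1 else y2))) *
              (z - (complex_of_real r - \<i> * complex_of_real (if j = 1 then y1 else y2))))"
    and "\<And>n. complex_of_real (x n) = 1 / p (of_nat n)"
  shows "hausdorff_moment_seq x \<longleftrightarrow> (y2 / y1 \<in> \<nat> \<and> y2 / y1 > 1)"
proof -
  have x: "x n = 1 / quintic y1 y2 (- r + real n)" for n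
  proof -
    have "p (of_nat n) = of_real (quintic y1 y2 (real n - r))"
      using assms(4)[of "of_nat n"] quintic_factorization[of "real n" r y1 y2] by simp
    then have "complex_of_real (x n) = complex_of_real (1 / quintic y1 y2 (real n - r))"
      using assms(5)[of n] by (simp only: of_real_divide of_real_1)
    then show ?thesis by (simp only: of_real_eq_iff diff_conv_add_uminus add.commute)
  qed
  show ?thesis
    by (rule hausdorff_moment_seq_inverse_quintic_iff[OF _ assms(2,3) x]) (use assms(1) in simp)
qed

end
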